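(* Consider the problem, algorithm and notation described in the context, with each $f_i$ $u$-strongly convex ($u>0$) and $l$-smooth, and DCGS run with parameters $\alpha_k=\frac{k}{k+1}$, $\theta_k=k+1$, $\eta_k=\frac{ku}{2}$, $\tau_k=\frac{4\|L\|^2}{(k+1)u}$, $e_i^k=\frac{\max(u\|\mathbf{x}^0-\mathbf{x}^*\|^2,\|L\|^2\|\mathbf{y}^0\|^2/u)}{mNk}$. Then to obtain an output with $F(\overline{\mathbf{x}}_N)-F(\mathbf{x}^* )\le\epsilon$, the number of communication rounds and the number of LO calls performed by each agent are respectively bounded by $$\mathcal{O}\left(\sqrt{\frac{\max\left(u\|\mathbf{x}^0-\mathbf{x}^*\|^2,\frac{\|L\|^2\|\mathbf{y}^0\|^2}{u}\right)}{\epsilon}}\right)\quad\text{and}\quad\mathcal{O}\left(\frac{ml\max\left(u\|\mathbf{x}^0-\mathbf{x}^*\|^2,\frac{\|L\|^2\|\mathbf{y}^0\|^2}{u}\right)}{\epsilon^2}\right).$$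
   Context: Let $G=(V,E)$ be a connected undirected graph with $V=\{1,\dots,m\}$ and $N(i)=\{j:(i,j)\in E\}$. Its Laplacian $L\in\mathbb{R}^{m\times m}$ has $L_{ii}=|N(i)|$, $L_{ij}=-1$ if $i\ne j$ and $(i,j)\in E$, and $L_{ij}=0$ otherwise; $\|L\|$ is its spectral norm. Agent $i$ holds $f_i:\mathbb{R}^d\to\mathbb{R}$ satisfying $\frac{u}{2}\|y-x\|^2\le f_i(y)-f_i(x)-\nabla f_i(x)^T(y-x)\le\frac{l}{2}\|y-x\|^2$. $X\subset\mathbb{R}^d$ is a nonempty compact convex set accessed through a linear oracle (LO) returning $\arg\min_{s\in X}\langle g,s\rangle$. For $\mathbf{x}=(x_1,\dots,x_m)\in X^m$ let $F(\mathbf{x})=\sum_{i=1}^m f_i(x_i)$, and let $\mathbf{x}^*$ be an optimal solution of $\min_{\mathbf{x}\in X^m}F(\mathbf{x})$ subject to $(L\otimes I_d)\mathbf{x}=0$. All norms on $\mathbb{R}^{md}$ are Euclidean. Procedure $CG(f,x,w,\eta,e)$ (Frank–Wolfe on $\phi(z)=\langle w,z\rangle+f(z)+\frac{\eta}{2}\|z-x\|^2$ over $X$): pick $z^0\in X$; for $t=0,1,\dots$: let $g^t=\nabla f(z^t)+w+\eta(z^t-x)$ and $s^t=\arg\min_{s\in X}\langle g^t,s\rangle$ (one LO call); if $\langle g^t,z^t-s^t\rangle\le e$ return $z^t$; otherwise $z^{t+1}=(1-\gamma_t)z^t+\gamma_t s^t$ with $\gamma_t=\frac{2}{t+2}$ or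 chosen by line search. Algorithm DCGS: given $N$, $\mathbf{x}^0=\mathbf{x}^{-1}\in X^m$, $\mathbf{y}^0\in\mathbb{R}^{md}$ and parameters $\{\alpha_k\},\{\tau_k\},\{\eta_k\},\{\theta_k\},\{e_i^k\}$. For $k=1,\dots,N$, every agent $i$ computes: $\tilde x_i^k=\alpha_k(x_i^{k-1}-x_i^{k-2})+x_i^{k-1}$ and broadcasts it to its neighbors; $v_i^k=\sum_{j\in N(i)\cup\{i\}}L_{ij}\tilde x_j^k$; $y_i^k=y_i^{k-1}+\frac{1}{\tau_k}v_i^k$ and broadcasts it to its neighbors; $w_i^k=\sum_{j\in N(i)\cup\{i\}}L_{ij}y_j^k$; $x_i^k=CG(f_i,x_i^{k-1},w_i^k,\eta_k,e_i^k)$. Thus each outer iteration uses two communication rounds. Output $\overline{\mathbf{x}}_N=(\sum_{k=1}^N\theta_k)^{-1}\sum_{k=1}^N\theta_k\mathbf{x}^k$. *)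

theory Defs
  imports "HOL-Analysis.Analysis"
begin

definition graph_ok :: "(nat \<Rightarrow> nat \<Rightarrow> bool) \<Rightarrow> nat \<Rightarrow> bool" where
  "graph_ok E m \<longleftrightarrow> m \<ge> 1
     \<and> (\<forall>i j. E i j \<longrightarrow> i \<in> {1..m} \<and> j \<in> {1..m})
     \<and> (\<forall>i j. E i j \<longrightarrow> E j i)
     \<and> (\<forall>i. \<not> E i i)
     \<and> (\<forall>i\<in>{1..m}. \<forall>j\<in>{1..m}. E\<^sup>*\<^sup>* i j)"

definition lap :: "(nat \<Rightarrow> nat \<Rightarrow> bool) \<Rightarrow> nat \<Rightarrow> nat \<Rightarrow> nat \<Rightarrow> real" where
  "lap E m i j = (if i = j then real (card {k\<in>{1..m}. E i k})
                  else if E i j then -1 else 0)"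

definition lap_norm :: "(nat \<Rightarrow> nat \<Rightarrow> bool) \<Rightarrow> nat \<Rightarrow> real" where
  "lap_norm E m = Sup {sqrt (\<Sum>i\<in>{1..m}. (\<Sum>j\<in>{1..m}. lap E m i j * v j)\<^sup>2) | v.
                        (\<Sum>j\<in>{1..m}. (v j)\<^sup>2) = 1}"

definition consensus :: "(nat \<Rightarrow> nat \<Rightarrow> bool) \<Rightarrow> nat \<Rightarrow> (nat \<Rightarrow> 'v::real_vector) \<Rightarrow> bool" where
  "consensus E m z \<longleftrightarrow> (\<forall>i\<in>{1..m}. (\<Sum>j\<in>{1..m}. lap E m i j *\<^sub>R z j) = 0)"

definition Fsum :: "nat \<Rightarrow> (nat \<Rightarrow> 'v \<Rightarrow> real) \<Rightarrow> (nat \<Rightarrow> 'v) \<Rightarrow> real" where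
  "Fsum m f z = (\<Sum>i\<in>{1..m}. f i (z i))"

definition sqdist :: "nat \<Rightarrow> (nat \<Rightarrow> 'v::real_normed_vector) \<Rightarrow> (nat \<Rightarrow> 'v) \<Rightarrow> real" where
  "sqdist m a b = (\<Sum>i\<in>{1..m}. (norm (a i - b i))\<^sup>2)"

definition sqnorm :: "nat \<Rightarrow> (nat \<Rightarrow> 'v::real_normed_vector) \<Rightarrow> real" where
  "sqnorm m a = (\<Sum>i\<in>{1..m}. (norm (a i))\<^sup>2)"

definition is_lo :: "'v::real_inner set \<Rightarrow> 'v \<Rightarrow> 'v \<Rightarrow> bool" where
  "is_lo X g s \<longleftrightarrow> s \<in> X \<and> (\<forall>s'\<in>X. inner g s \<le> inner g s')"

definition cg_phi :: "('v::real_inner \<Rightarrow> real) \<Rightarrow> 'v \<Rightarrow> 'v \<Rightarrow> real \<Rightarrow> 'v \<Rightarrow> real" where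
  "cg_phi f x w \<eta> z = inner w z + f z + \<eta> / 2 * (norm (z - x))\<^sup>2"

definition cg_grad :: "('v::real_inner \<Rightarrow> 'v) \<Rightarrow> 'v \<Rightarrow> 'v \<Rightarrow> real \<Rightarrow> 'v \<Rightarrow> 'v" where
  "cg_grad gf x w \<eta> z = gf z + w + \<eta> *\<^sub>R (z - x)"

text \<open>A partial run of CG(f,x,w,eta,e) that has performed T+1 LO calls
  (calls at t = 0..T), where the stopping test failed at every t < T.
  Step size: either 2/(t+2) or exact line search on [0,1].\<close>
definition cg_partial ::
  "'v::real_inner set \<Rightarrow> ('v \<Rightarrow> real) \<Rightarrow> ('v \<Rightarrow> 'v) \<Rightarrow> 'v \<Rightarrow> 'v \<Rightarrow> real \<Rightarrow> real
    \<Rightarrow> (nat \<Rightarrow> 'v) \<Rightarrow> (nat \<Rightarrow> 'v) \<Rightarrow> nat \<Rightarrow> bool" where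
  "cg_partial X f gf x w \<eta> e z s T \<longleftrightarrow>
     z 0 \<in> X
   \<and> (\<forall>t\<le>T. is_lo X (cg_grad gf x w \<eta> (z t)) (s t))
   \<and> (\<forall>t<T. inner (cg_grad gf x w \<eta> (z t)) (z t - s t) > e
        \<and> (z (Suc t) = (1 - 2 / (real t + 2)) *\<^sub>R z t + (2 / (real t + 2)) *\<^sub>R s t
           \<or> (\<exists>\<gamma>\<in>{0..1}. z (Suc t) = (1 - \<gamma>) *\<^sub>R z t + \<gamma> *\<^sub>R s t
                \<and> (\<forall>\<gamma>'\<in>{0..1}. cg_phi f x w \<eta> (z (Suc t))
                      \<le> cg_phi f x w \<eta> ((1 - \<gamma>') *\<^sub>R z t + \<gamma>' *\<^sub>R s t)))))"

definition cg_complete ::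
  "'v::real_inner set \<Rightarrow> ('v \<Rightarrow> real) \<Rightarrow> ('v \<Rightarrow> 'v) \<Rightarrow> 'v \<Rightarrow> 'v \<Rightarrow> real \<Rightarrow> real
    \<Rightarrow> (nat \<Rightarrow> 'v) \<Rightarrow> (nat \<Rightarrow> 'v) \<Rightarrow> nat \<Rightarrow> bool" where
  "cg_complete X f gf x w \<eta> e z s T \<longleftrightarrow>
     cg_partial X f gf x w \<eta> e z s T
   \<and> inner (cg_grad gf x w \<eta> (z T)) (z T - s T) \<le> e"

text \<open>x k i = x_i^k for k \<ge> 0; x^{-1} = x^0 is obtained as x (k-2) for k = 1
  (natural-number subtraction).\<close>
definition dcgs_xt :: "(nat \<Rightarrow> real) \<Rightarrow> (nat \<Rightarrow> nat \<Rightarrow> 'v::real_vector) \<Rightarrow> nat \<Rightarrow> nat \<Rightarrow> 'v" where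
  "dcgs_xt \<alpha> x k j = \<alpha> k *\<^sub>R (x (k - 1) j - x (k - 2) j) + x (k - 1) j"

definition dcgs_y ::
  "(nat \<Rightarrow> nat \<Rightarrow> bool) \<Rightarrow> nat \<Rightarrow> (nat \<Rightarrow> real) \<Rightarrow> (nat \<Rightarrow> real)
    \<Rightarrow> (nat \<Rightarrow> nat \<Rightarrow> 'v::real_vector) \<Rightarrow> (nat \<Rightarrow> nat \<Rightarrow> 'v) \<Rightarrow> nat \<Rightarrow> nat \<Rightarrow> 'v" where
  "dcgs_y E m \<alpha> \<tau> x y k i =
     y (k - 1) i + (1 / \<tau> k) *\<^sub>R (\<Sum>j\<in>{1..m}. lap E m i j *\<^sub>R dcgs_xt \<alpha> x k j)"

definition dcgs_w ::
  "(nat \<Rightarrow> nat \<Rightarrow> bool) \<Rightarrow> nat \<Rightarrow> (nat \<Rightarrow> 'v::real_vector) \<Rightarrow> nat \<Rightarrow> 'v" where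
  "dcgs_w E m yk i = (\<Sum>j\<in>{1..m}. lap E m i j *\<^sub>R yk j)"

text \<open>An execution of the first K outer iterations of DCGS; Z k i, S k i, T k i
  record the CG run of agent i at outer iteration k.\<close>
definition dcgs_exec ::
  "'v::real_inner set \<Rightarrow> (nat \<Rightarrow> nat \<Rightarrow> bool) \<Rightarrow> nat \<Rightarrow> (nat \<Rightarrow> 'v \<Rightarrow> real) \<Rightarrow> (nat \<Rightarrow> 'v \<Rightarrow> 'v)
    \<Rightarrow> (nat \<Rightarrow> real) \<Rightarrow> (nat \<Rightarrow> real) \<Rightarrow> (nat \<Rightarrow> real) \<Rightarrow> (nat \<Rightarrow> nat \<Rightarrow> real)
    \<Rightarrow> (nat \<Rightarrow> 'v) \<Rightarrow> (nat \<Rightarrow> 'v) \<Rightarrow> nat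
    \<Rightarrow> (nat \<Rightarrow> nat \<Rightarrow> 'v) \<Rightarrow> (nat \<Rightarrow> nat \<Rightarrow> 'v)
    \<Rightarrow> (nat \<Rightarrow> nat \<Rightarrow> nat \<Rightarrow> 'v) \<Rightarrow> (nat \<Rightarrow> nat \<Rightarrow> nat \<Rightarrow> 'v) \<Rightarrow> (nat \<Rightarrow> nat \<Rightarrow> nat) \<Rightarrow> bool" where
  "dcgs_exec X E m f gf \<alpha> \<tau> \<eta> e x0 y0 K x y Z S T \<longleftrightarrow>
     x 0 = x0 \<and> y 0 = y0
   \<and> (\<forall>k\<in>{1..K}. \<forall>i\<in>{1..m}.
        y k i = dcgs_y E m \<alpha> \<tau> x y k i
      \<and> cg_complete X (f i) (gf i) (x (k - 1) i) (dcgs_w E m (y k) i) (\<eta> k) (e k i)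
                    (Z k i) (S k i) (T k i)
      \<and> x k i = Z k i (T k i))"

definition dcgs_out :: "nat \<Rightarrow> (nat \<Rightarrow> real) \<Rightarrow> (nat \<Rightarrow> nat \<Rightarrow> 'v::real_vector) \<Rightarrow> nat \<Rightarrow> 'v" where
  "dcgs_out N \<theta> x i = (1 / (\<Sum>k\<in>{1..N}. \<theta> k)) *\<^sub>R (\<Sum>k\<in>{1..N}. \<theta> k *\<^sub>R x k i)"

definition Dconst :: "real \<Rightarrow> real \<Rightarrow> nat \<Rightarrow> (nat \<Rightarrow> 'v::real_normed_vector) \<Rightarrow> (nat \<Rightarrow> 'v)
    \<Rightarrow> (nat \<Rightarrow> 'v) \<Rightarrow> real" where
  "Dconst u Lnm m x0 xs y0 = max (u * sqdist m x0 xs) (Lnm\<^sup>2 * sqnorm m y0 / u)"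

definition par_alpha :: "nat \<Rightarrow> real" where "par_alpha k = real k / (real k + 1)"
definition par_theta :: "nat \<Rightarrow> real" where "par_theta k = real k + 1"
definition par_eta :: "real \<Rightarrow> nat \<Rightarrow> real" where "par_eta u k = real k * u / 2"
definition par_tau :: "real \<Rightarrow> real \<Rightarrow> nat \<Rightarrow> real" where
  "par_tau u Lnm k = 4 * Lnm\<^sup>2 / ((real k + 1) * u)"
definition par_e :: "real \<Rightarrow> nat \<Rightarrow> nat \<Rightarrow> nat \<Rightarrow> nat \<Rightarrow> real" where
  "par_e D m N k i = D / (real m * real N * real k)"

end

(*
  Each CG call of agent i stops at a point whose Frank--Wolfe gap is at most e_i^k, which yields a
  three-point inequality for its proximal subproblem. Summed over the agents and weighted by
  theta_k = k + 1, these inequalities telescope against a potential made of the weighted distance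
  to the solution xs, the dual norm ||y^k||^2 and the coupling <L(x^k - x^(k-1)), y^k>; the cross
  terms are absorbed by Young's inequality with the spectral norm ||L||. This gives
  sum_k theta_k (F(x^k) - F(xs)) <= 9 D / 2 and, by convexity, F(xbar_N) - F(xs) <= 9 D / N^2,
  so N = ceil(3 sqrt(D / eps)) outer iterations (2N communication rounds) suffice.
  Independently, the open-loop Frank--Wolfe rate bounds the number of LO calls of the k-th
  subproblem by O((l + eta_k) diam(X)^2 / e_k) = O(N^3 m l diam(X)^2 / D), so all N iterations
  cost O(N^4 m l diam(X)^2 / D) = O(m l D / eps^2) calls; diam(X)^2 is absorbed into C2.
*)

theory Submission
  imports Defs
begin

definition stacked_inner :: "nat \<Rightarrow> (nat \<Rightarrow> 'v::real_inner) \<Rightarrow> (nat \<Rightarrow> 'v) \<Rightarrow> real" where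
  "stacked_inner m a b = (\<Sum>i\<in>{1..m}. inner (a i) (b i))"

lemma sqnorm_nonneg: "0 \<le> sqnorm m a"
  unfolding sqnorm_def by (auto intro: sum_nonneg)

lemma sqdist_nonneg: "0 \<le> sqdist m a b"
  unfolding sqdist_def by (auto intro: sum_nonneg)

lemma sqdist_eq_sqnorm_diff: "sqdist m a b = sqnorm m (\<lambda>j. a j - b j)"
  unfolding sqdist_def sqnorm_def by simp

lemma lap_sym: "(\<forall>i j. E i j \<longrightarrow> E j i) \<Longrightarrow> lap E m i j = lap E m j i"
  unfolding lap_def by auto

text \<open>dcgs_w E m a i is block i of the Kronecker product (L \<otimes> I_d) applied to a.\<close>

lemma stacked_inner_dcgs_w_swap:
  assumes "\<forall>i j. E i j \<longrightarrow> E j i"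
  shows "stacked_inner m (dcgs_w E m a) b = stacked_inner m a (dcgs_w E m b)"
proof -
  have "stacked_inner m (dcgs_w E m a) b = (\<Sum>i\<in>{1..m}. \<Sum>j\<in>{1..m}. lap E m i j * inner (a j) (b i))"
    unfolding stacked_inner_def dcgs_w_def by (simp add: inner_sum_left)
  also have "\<dots> = (\<Sum>j\<in>{1..m}. \<Sum>i\<in>{1..m}. lap E m i j * inner (a j) (b i))"
    by (rule sum.swap)
  also have "\<dots> = stacked_inner m a (dcgs_w E m b)"
    unfolding stacked_inner_def dcgs_w_def using lap_sym[OF assms]
    by (simp add: inner_sum_right inner_commute)
  finally show ?thesis .
qed

lemma dcgs_w_add: "dcgs_w E m (\<lambda>j. a j + b j) i = dcgs_w E m a i + dcgs_w E m b i"
  unfolding dcgs_w_def by (simp add: scaleR_add_right sum.distrib)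

lemma dcgs_w_diff: "dcgs_w E m (\<lambda>j. a j - b j) i = dcgs_w E m a i - dcgs_w E m b i"
  unfolding dcgs_w_def by (simp add: scaleR_diff_right sum_subtractf)

lemma dcgs_w_scaleR: "dcgs_w E m (\<lambda>j. c *\<^sub>R a j) i = c *\<^sub>R dcgs_w E m a i"
  unfolding dcgs_w_def by (simp add: scaleR_sum_right mult.commute)

lemma dcgs_w_zero: "dcgs_w E m (\<lambda>j. 0) i = 0"
  unfolding dcgs_w_def by simp

lemma bdd_above_lap_norm_set:
  "bdd_above {sqrt (\<Sum>i\<in>{1..m}. (\<Sum>j\<in>{1..m}. lap E m i j * v j)\<^sup>2) | v.
                (\<Sum>j\<in>{1..m}. (v j)\<^sup>2) = 1}"
proof (rule bdd_aboveI, safe)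
  fix v :: "nat \<Rightarrow> real" assume v: "(\<Sum>j\<in>{1..m}. (v j)\<^sup>2) = 1"
  have "\<bar>v j\<bar> \<le> 1" if "j \<in> {1..m}" for j
  proof -
    have "(v j)\<^sup>2 \<le> 1"
      using member_le_sum[of j "{1..m}" "\<lambda>j. (v j)\<^sup>2"] that v by simp
    then show ?thesis by (simp add: abs_square_le_1)
  qed
  then have "\<bar>\<Sum>j\<in>{1..m}. lap E m i j * v j\<bar> \<le> (\<Sum>j\<in>{1..m}. \<bar>lap E m i j\<bar>)" for i
    by (intro order_trans[OF sum_abs] sum_mono) (auto simp: abs_mult intro: mult_left_le)
  then have "(\<Sum>i\<in>{1..m}. (\<Sum>j\<in>{1..m}. lap E m i j * v j)\<^sup>2)
      \<le> (\<Sum>i\<in>{1..m}. (\<Sum>j\<in>{1..m}. \<bar>lap E m i j\<bar>)\<^sup>2)"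
    by (intro sum_mono) (metis abs_le_square_iff abs_of_nonneg abs_ge_zero order_trans)
  then show "sqrt (\<Sum>i\<in>{1..m}. (\<Sum>j\<in>{1..m}. lap E m i j * v j)\<^sup>2)
      \<le> sqrt (\<Sum>i\<in>{1..m}. (\<Sum>j\<in>{1..m}. \<bar>lap E m i j\<bar>)\<^sup>2)"
    by simp
qed

lemma lap_quadratic_le_lap_norm:
  fixes c :: "nat \<Rightarrow> real"
  shows "(\<Sum>i\<in>{1..m}. (\<Sum>j\<in>{1..m}. lap E m i j * c j)\<^sup>2)
    \<le> (lap_norm E m)\<^sup>2 * (\<Sum>j\<in>{1..m}. (c j)\<^sup>2)"
proof (cases "(\<Sum>j\<in>{1..m}. (c j)\<^sup>2) = 0")
  case True
  then have "\<forall>j\<in>{1..m}. c j = 0"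
    by (subst (asm) sum_nonneg_eq_0_iff) auto
  then show ?thesis by simp
next
  case False
  define s where "s = (\<Sum>j\<in>{1..m}. (c j)\<^sup>2)"
  have s: "s > 0"
    using False unfolding s_def by (metis less_eq_real_def sum_nonneg zero_le_power2)
  define v where "v j = c j / sqrt s" for j
  define Q where "Q = (\<Sum>i\<in>{1..m}. (\<Sum>j\<in>{1..m}. lap E m i j * v j)\<^sup>2)"
  have "(\<Sum>j\<in>{1..m}. (v j)\<^sup>2) = 1"
    unfolding v_def using s by (simp add: power_divide sum_divide_distrib[symmetric] s_def)
  then have "sqrt Q \<le> lap_norm E m"
    unfolding lap_norm_def Q_def by (intro cSup_upper bdd_above_lap_norm_set) blast
  then have "Q \<le> (lap_norm E m)\<^sup>2"
    by (rule sqrt_le_D)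
  moreover have "Q = (\<Sum>i\<in>{1..m}. (\<Sum>j\<in>{1..m}. lap E m i j * c j)\<^sup>2) / s"
    unfolding Q_def v_def using s
    by (simp add: sum_divide_distrib[symmetric] power_divide)
  ultimately show ?thesis
    using s by (simp add: s_def divide_le_eq mult.commute)
qed

lemma sqnorm_dcgs_w_le:
  fixes a :: "nat \<Rightarrow> 'v::euclidean_space"
  shows "sqnorm m (dcgs_w E m a) \<le> (lap_norm E m)\<^sup>2 * sqnorm m a"
proof -
  have norm_coords: "(norm (v::'v))\<^sup>2 = (\<Sum>b\<in>Basis. (inner v b)\<^sup>2)" for v
    unfolding power2_norm_eq_inner by (subst euclidean_inner) (simp add: power2_eq_square)
  have coord: "inner (dcgs_w E m a i) b = (\<Sum>j\<in>{1..m}. lap E m i j * inner (a j) b)" for i b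
    unfolding dcgs_w_def by (simp add: inner_sum_left)
  have "sqnorm m (dcgs_w E m a)
      = (\<Sum>b\<in>Basis. \<Sum>i\<in>{1..m}. (\<Sum>j\<in>{1..m}. lap E m i j * inner (a j) b)\<^sup>2)"
    unfolding sqnorm_def norm_coords coord by (rule sum.swap)
  also have "\<dots> \<le> (\<Sum>b\<in>(Basis::'v set). (lap_norm E m)\<^sup>2 * (\<Sum>j\<in>{1..m}. (inner (a j) b)\<^sup>2))"
    by (intro sum_mono lap_quadratic_le_lap_norm)
  also have "\<dots> = (lap_norm E m)\<^sup>2 * sqnorm m a"
    unfolding sqnorm_def norm_coords sum_distrib_left[symmetric] by (subst sum.swap) (rule refl)
  finally show ?thesis .
qed

lemma dcgs_w_eq_0_if_lap_norm_eq_0: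
  fixes a :: "nat \<Rightarrow> 'v::euclidean_space"
  assumes "lap_norm E m = 0" and "i \<in> {1..m}"
  shows "dcgs_w E m a i = 0"
proof -
  have "sqnorm m (dcgs_w E m a) = 0"
    using sqnorm_dcgs_w_le[of m E a] assms(1) sqnorm_nonneg[of m "dcgs_w E m a"] by simp
  then show ?thesis
    unfolding sqnorm_def using assms(2) by (subst (asm) sum_nonneg_eq_0_iff) auto
qed

lemma young_inner:
  fixes a b :: "'v::real_inner"
  assumes "P > 0"
  shows "c * inner a b \<le> P * (norm b)\<^sup>2 + c\<^sup>2 / (4 * P) * (norm a)\<^sup>2"
proof -
  have "0 \<le> (norm ((2 * P) *\<^sub>R b - c *\<^sub>R a))\<^sup>2" by simp
  also have "\<dots> = 4 * P\<^sup>2 * (norm b)\<^sup>2 - 4 * P * c * inner a b + c\<^sup>2 * (norm a)\<^sup>2"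
    unfolding power2_norm_eq_inner inner_diff_left inner_diff_right inner_scaleR_left inner_scaleR_right
    by (simp add: inner_commute[of b a] power2_eq_square algebra_simps)
  finally have "4 * P * (c * inner a b) \<le> 4 * P * (P * (norm b)\<^sup>2 + c\<^sup>2 / (4 * P) * (norm a)\<^sup>2)"
    using assms by (simp add: algebra_simps power2_eq_square)
  then show ?thesis using assms by simp
qed

lemma young_stacked_inner_dcgs_w:
  fixes a b :: "nat \<Rightarrow> 'v::euclidean_space"
  assumes P: "P \<ge> 0" and Q: "Q \<ge> 0" and c: "c\<^sup>2 * (lap_norm E m)\<^sup>2 \<le> 4 * P * Q"
  shows "c * stacked_inner m (dcgs_w E m a) b \<le> P * sqnorm m b + Q * sqnorm m a"
proof (cases "P = 0")
  case True
  then have "c = 0 \<or> lap_norm E m = 0"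
    using c by (metis mult_eq_0_iff mult_zero_right order_antisym power_not_zero zero_le_mult_iff zero_le_power2)
  then have "c * stacked_inner m (dcgs_w E m a) b = 0"
    unfolding stacked_inner_def by (auto simp: dcgs_w_eq_0_if_lap_norm_eq_0)
  moreover have "0 \<le> P * sqnorm m b + Q * sqnorm m a"
    using P Q by (simp add: sqnorm_nonneg)
  ultimately show ?thesis by linarith
next
  case False
  then have P: "P > 0" using P by simp
  have "c * stacked_inner m (dcgs_w E m a) b
      \<le> (\<Sum>i\<in>{1..m}. P * (norm (b i))\<^sup>2 + c\<^sup>2 / (4 * P) * (norm (dcgs_w E m a i))\<^sup>2)"
    unfolding stacked_inner_def sum_distrib_left by (intro sum_mono young_inner P)
  also have "\<dots> = P * sqnorm m b + c\<^sup>2 / (4 * P) * sqnorm m (dcgs_w E m a)"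
    unfolding sqnorm_def by (simp add: sum.distrib sum_distrib_left)
  also have "\<dots> \<le> P * sqnorm m b + c\<^sup>2 / (4 * P) * (lap_norm E m)\<^sup>2 * sqnorm m a"
    using sqnorm_dcgs_w_le[of m E a] P
    by (simp add: mult.assoc divide_right_mono mult_left_mono)
  also have "\<dots> \<le> P * sqnorm m b + Q * sqnorm m a"
    using c P by (intro add_left_mono mult_right_mono sqnorm_nonneg) (simp add: divide_le_eq mult.commute)
  finally show ?thesis .
qed

lemma fw_primal_rate:
  fixes h G :: "nat \<Rightarrow> real"
  assumes C: "C \<ge> 0"
    and gap: "\<And>t. t < T \<Longrightarrow> h t \<le> G t"
    and descent: "\<And>t. t < T \<Longrightarrow> h (Suc t) \<le> h t - 2 / (real t + 2) * G t + (2 / (real t + 2))\<^sup>2 * C / 2"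
  shows "1 \<le> t \<Longrightarrow> t \<le> T \<Longrightarrow> h t \<le> 2 * C / (real t + 2)"
proof (induction t)
  case 0
  then show ?case by simp
next
  case (Suc t)
  have tT: "t < T" using Suc.prems by simp
  show ?case
  proof (cases "t = 0")
    case True
    then show ?thesis using descent[OF tT] gap[OF tT] C by simp
  next
    case False
    define \<gamma> where "\<gamma> = 2 / (real t + 2)"
    have \<gamma>: "0 \<le> \<gamma>" "\<gamma> \<le> 1" "1 - \<gamma> = real t / (real t + 2)" unfolding \<gamma>_def by (auto simp: field_simps)
    have "h (Suc t) \<le> (1 - \<gamma>) * h t + \<gamma>\<^sup>2 * C / 2"
      using descent[OF tT] mult_left_mono[OF gap[OF tT] \<gamma>(1)] unfolding \<gamma>_def by (simp add: algebra_simps)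
    also have "\<dots> \<le> (1 - \<gamma>) * (2 * C / (real t + 2)) + \<gamma>\<^sup>2 * C / 2"
      using Suc.IH False tT \<gamma> by (intro add_right_mono mult_left_mono) auto
    also have "\<dots> = 2 * C * (real t + 1) / (real t + 2)\<^sup>2"
      unfolding \<gamma>(3) unfolding \<gamma>_def by (simp add: power2_eq_square divide_simps) (simp add: algebra_simps)
    also have "\<dots> \<le> 2 * C / (real (Suc t) + 2)"
    proof -
      have "(real t + 1) * (real t + 3) \<le> (real t + 2)\<^sup>2" by (simp add: power2_eq_square algebra_simps)
      then have "(real t + 1) / (real t + 2)\<^sup>2 \<le> 1 / (real t + 3)" by (simp add: field_simps)
      from mult_left_mono[OF this, of "2 * C"] C show ?thesis by (simp add: add.commute)
    qed
    finally show ?thesis .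
  qed
qed

text \<open>Frank--Wolfe with the open-loop step 2/(t+2): while the gap G t stays above e, the
  decrease per step on the second half of the run is about e/T, while the primal error at T/2 is
  O(C/T); hence T = O(C/e).\<close>

lemma fw_gap_count:
  fixes h G :: "nat \<Rightarrow> real"
  assumes C: "C \<ge> 0" and e: "e > 0"
    and nonneg: "\<And>t. t \<le> T \<Longrightarrow> h t \<ge> 0"
    and gap: "\<And>t. t < T \<Longrightarrow> h t \<le> G t"
    and descent: "\<And>t. t < T \<Longrightarrow> h (Suc t) \<le> h t - 2 / (real t + 2) * G t + (2 / (real t + 2))\<^sup>2 * C / 2"
    and large_gap: "\<And>t. t < T \<Longrightarrow> G t > e"
  shows "real (T + 1) \<le> 2 + 16 * C / e"
proof (cases "T \<le> 1")
  case True
  then have "real T \<le> 1" by simp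
  moreover have "0 \<le> 16 * C / e" using C e by simp
  ultimately show ?thesis by simp
next
  case False
  define a where "a = T div 2"
  have a: "1 \<le> a" "a < T" "2 * real a \<le> real T" "real T \<le> 2 * real a + 1"
    using False unfolding a_def by linarith+
  define K where "K = 2 * e / (real T + 1) - 2 * C / (real a + 2)\<^sup>2"
  have step_decrease: "h (Suc t) \<le> h t - K" if "a \<le> t" "t < T" for t
  proof -
    define \<gamma> where "\<gamma> = 2 / (real t + 2)"
    have \<gamma>: "\<gamma> > 0" "2 / (real T + 1) \<le> \<gamma>" "\<gamma> \<le> 2 / (real a + 2)"
      unfolding \<gamma>_def using that by (auto simp: frac_le)
    have "2 / (real T + 1) * e \<le> \<gamma> * G t"
      using \<gamma> large_gap[OF that(2)] e by (intro mult_mono) auto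
    moreover have "\<gamma>\<^sup>2 * C / 2 \<le> (2 / (real a + 2))\<^sup>2 * C / 2"
      using \<gamma> C by (intro divide_right_mono mult_right_mono power_mono) auto
    ultimately show ?thesis
      using descent[OF that(2)] unfolding K_def \<gamma>_def by (simp add: power_divide)
  qed
  have telescope: "j \<le> T - a \<Longrightarrow> h (a + j) \<le> h a - real j * K" for j
  proof (induction j)
    case (Suc j)
    have "h (Suc (a + j)) \<le> h (a + j) - K" using Suc.prems by (intro step_decrease) auto
    then show ?case using Suc by (simp add: algebra_simps)
  qed simp
  have "0 \<le> h a - real (T - a) * K"
    using nonneg[of T] telescope[of "T - a"] a by simp
  moreover have "h a \<le> 2 * C / (real a + 2)"
    using fw_primal_rate[OF C gap descent] a by simp
  ultimately have main: "real (T - a) * (2 * e / (real T + 1))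
      \<le> 2 * C / (real a + 2) + real (T - a) * (2 * C / (real a + 2)\<^sup>2)"
    unfolding K_def by (simp add: algebra_simps)
  have Ta: "real (T - a) = real T - real a" using a by simp
  have "e * (real T + 1) \<le> e * (4 * (real T - real a))"
    using a e by (intro mult_left_mono) auto
  then have "e / 2 \<le> real (T - a) * (2 * e / (real T + 1))"
    unfolding Ta by (simp add: field_simps)
  moreover have "real (T - a) * (2 * C / (real a + 2)\<^sup>2) \<le> 2 * C / (real a + 2)"
  proof -
    have "real (T - a) / (real a + 2) \<le> 1" unfolding Ta using a by simp
    from mult_right_mono[OF this, of "2 * C / (real a + 2)"] C show ?thesis
      by (simp add: power2_eq_square)
  qed
  ultimately have "e / 2 \<le> 4 * C / (real a + 2)" using main by simp
  also have "\<dots> \<le> 8 * C / (real T + 1)"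
  proof -
    have "C * (real T + 1) \<le> C * (2 * (real a + 2))"
      using a C by (intro mult_left_mono) auto
    then show ?thesis by (simp add: field_simps)
  qed
  finally show ?thesis using e by (simp add: field_simps)
qed

lemma cg_phi_bregman:
  fixes p q x w :: "'v::real_inner"
  shows "cg_phi f x w \<eta> q - cg_phi f x w \<eta> p - inner (cg_grad gf x w \<eta> p) (q - p)
     = (f q - f p - inner (gf p) (q - p)) + \<eta> / 2 * (norm (q - p))\<^sup>2"
proof -
  have "(norm (q - x))\<^sup>2 = (norm ((p - x) + (q - p)))\<^sup>2" by simp
  also have "\<dots> = (norm (p - x))\<^sup>2 + 2 * inner (p - x) (q - p) + (norm (q - p))\<^sup>2"
    unfolding power2_norm_eq_inner inner_add_left inner_add_right
    by (simp add: inner_commute[of "q - p" "p - x"])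
  finally have expand: "(norm (q - x))\<^sup>2 = (norm (p - x))\<^sup>2 + 2 * inner (p - x) (q - p) + (norm (q - p))\<^sup>2" .
  have "\<eta> / 2 * (norm (q - x))\<^sup>2
      = \<eta> / 2 * (norm (p - x))\<^sup>2 + \<eta> * inner (p - x) (q - p) + \<eta> / 2 * (norm (q - p))\<^sup>2"
    unfolding expand by (simp add: algebra_simps)
  moreover have "inner (cg_grad gf x w \<eta> p) (q - p)
      = inner (gf p) (q - p) + inner w (q - p) + \<eta> * inner (p - x) (q - p)"
    unfolding cg_grad_def by (simp add: inner_add_left)
  ultimately show ?thesis
    unfolding cg_phi_def using inner_diff_right[of w q p] by linarith
qed

lemma cg_partial_lo:
  "cg_partial X f gf x w \<eta> e z s T \<Longrightarrow> t \<le> T \<Longrightarrow> is_lo X (cg_grad gf x w \<eta> (z t)) (s t)"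
  unfolding cg_partial_def by blast

lemma cg_partial_gap_gt:
  "cg_partial X f gf x w \<eta> e z s T \<Longrightarrow> t < T \<Longrightarrow> inner (cg_grad gf x w \<eta> (z t)) (z t - s t) > e"
  unfolding cg_partial_def by blast

lemma cg_partial_step:
  assumes "cg_partial X f gf x w \<eta> e z s T" and "t < T"
  obtains "z (Suc t) = (1 - 2 / (real t + 2)) *\<^sub>R z t + (2 / (real t + 2)) *\<^sub>R s t"
  | \<gamma> where "\<gamma> \<in> {0..1}" and "z (Suc t) = (1 - \<gamma>) *\<^sub>R z t + \<gamma> *\<^sub>R s t"
      and "\<forall>\<gamma>'\<in>{0..1}. cg_phi f x w \<eta> (z (Suc t)) \<le> cg_phi f x w \<eta> ((1 - \<gamma>') *\<^sub>R z t + \<gamma>' *\<^sub>R s t)"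
  using assms unfolding cg_partial_def by blast

lemma cg_partial_iterate_in:
  assumes "convex X" and "cg_partial X f gf x w \<eta> e z s T" and "t \<le> T"
  shows "z t \<in> X"
  using assms(3)
proof (induction t)
  case 0
  then show ?case using assms(2) unfolding cg_partial_def by simp
next
  case (Suc t)
  then have "t < T" by simp
  have "s t \<in> X" "z t \<in> X"
    using cg_partial_lo[OF assms(2)] Suc unfolding is_lo_def by auto
  moreover have "(2 / (real t + 2)) \<in> {0..1}" by simp
  ultimately show ?case
    by (cases rule: cg_partial_step[OF assms(2) \<open>t < T\<close>]) (auto intro: convexD_alt[OF assms(1)])
qed

lemma cg_partial_descent:
  fixes X :: "'v::real_inner set"
  assumes "convex X"
    and smooth: "\<forall>p q. f q - f p - inner (gf p) (q - p) \<le> l / 2 * (norm (q - p))\<^sup>2"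
    and "\<eta> \<ge> 0" "l \<ge> 0"
    and diam: "\<forall>a\<in>X. \<forall>b\<in>X. (norm (a - b))\<^sup>2 \<le> dd"
    and run: "cg_partial X f gf x w \<eta> e z s T" and "t < T"
  shows "cg_phi f x w \<eta> (z (Suc t)) \<le> cg_phi f x w \<eta> (z t)
      - 2 / (real t + 2) * inner (cg_grad gf x w \<eta> (z t)) (z t - s t)
      + (2 / (real t + 2))\<^sup>2 * ((l + \<eta>) * dd) / 2"
proof -
  define \<phi> where "\<phi> = cg_phi f x w \<eta>"
  define g where "g = cg_grad gf x w \<eta> (z t)"
  define zc where "zc c = (1 - c) *\<^sub>R z t + c *\<^sub>R s t" for c
  define \<gamma> where "\<gamma> = 2 / (real t + 2)"
  have in_X: "z t \<in> X" "s t \<in> X"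
    using cg_partial_iterate_in[OF assms(1) run] cg_partial_lo[OF run] \<open>t < T\<close>
    unfolding is_lo_def by auto
  have quadratic_bound: "\<phi> (zc c) \<le> \<phi> (z t) - c * inner g (z t - s t) + c\<^sup>2 * ((l + \<eta>) * dd) / 2" for c
  proof -
    have zc: "zc c - z t = c *\<^sub>R (s t - z t)" unfolding zc_def by (simp add: algebra_simps)
    have "f (zc c) - f (z t) - inner (gf (z t)) (zc c - z t) \<le> l / 2 * (norm (zc c - z t))\<^sup>2"
      using smooth by blast
    then have "\<phi> (zc c) \<le> \<phi> (z t) + inner g (zc c - z t) + (l + \<eta>) / 2 * (norm (zc c - z t))\<^sup>2"
      using cg_phi_bregman[of f x w \<eta> "zc c" "z t" gf]
      unfolding \<phi>_def g_def add_divide_distrib distrib_right by linarith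
    moreover have "(l + \<eta>) / 2 * (norm (zc c - z t))\<^sup>2 \<le> c\<^sup>2 * ((l + \<eta>) * dd) / 2"
      using diam in_X assms(3,4) unfolding zc
      by (simp add: power_mult_distrib mult_left_mono mult.left_commute)
    moreover have "inner g (zc c - z t) = - c * inner g (z t - s t)"
      unfolding zc by (simp add: inner_diff_right algebra_simps)
    ultimately show ?thesis by linarith
  qed
  have "\<phi> (z (Suc t)) \<le> \<phi> (zc \<gamma>)"
  proof -
    have "\<gamma> \<in> {0..1}" unfolding \<gamma>_def by simp
    moreover have "z (Suc t) = zc \<gamma> \<or> (\<forall>c\<in>{0..1}. \<phi> (z (Suc t)) \<le> \<phi> (zc c))"
      by (rule cg_partial_step[OF run \<open>t < T\<close>]) (auto simp: \<phi>_def zc_def \<gamma>_def)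
    ultimately show ?thesis by auto
  qed
  then show ?thesis
    using quadratic_bound[of \<gamma>] unfolding \<phi>_def g_def \<gamma>_def by simp
qed

lemma cg_partial_calls_le:
  fixes X :: "'v::euclidean_space set" and f :: "'v \<Rightarrow> real"
  assumes "compact X" "convex X"
    and deriv: "\<forall>z. (f has_derivative (\<lambda>h. inner (gf z) h)) (at z)"
    and convex: "\<forall>p q. 0 \<le> f q - f p - inner (gf p) (q - p)"
    and smooth: "\<forall>p q. f q - f p - inner (gf p) (q - p) \<le> l / 2 * (norm (q - p))\<^sup>2"
    and "\<eta> \<ge> 0" "l \<ge> 0" "e > 0"
    and diam: "\<forall>a\<in>X. \<forall>b\<in>X. (norm (a - b))\<^sup>2 \<le> dd"
    and run: "cg_partial X f gf x w \<eta> e z s T"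
  shows "real (T + 1) \<le> 2 + 16 * ((l + \<eta>) * dd) / e"
proof -
  define \<phi> where "\<phi> = cg_phi f x w \<eta>"
  define G where "G t = inner (cg_grad gf x w \<eta> (z t)) (z t - s t)" for t
  have z_in: "t \<le> T \<Longrightarrow> z t \<in> X" for t
    using cg_partial_iterate_in[OF assms(2) run] .
  have "continuous_on X \<phi>"
    unfolding \<phi>_def cg_phi_def using deriv
    by (intro continuous_intros continuous_at_imp_continuous_on)
      (meson has_derivative_continuous)
  then obtain p where "p \<in> X" and p_min: "\<forall>y\<in>X. \<phi> p \<le> \<phi> y"
    using continuous_attains_inf[OF assms(1)] z_in[of 0] by blast
  define h where "h t = \<phi> (z t) - \<phi> p" for t
  have "h t \<le> G t" if "t < T" for t
  proof -
    have "inner (cg_grad gf x w \<eta> (z t)) (s t) \<le> inner (cg_grad gf x w \<eta> (z t)) p"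
      using cg_partial_lo[OF run] that \<open>p \<in> X\<close> unfolding is_lo_def by auto
    moreover have "\<phi> (z t) + inner (cg_grad gf x w \<eta> (z t)) (p - z t) \<le> \<phi> p"
    proof -
      have "0 \<le> \<eta> / 2 * (norm (p - z t))\<^sup>2" using \<open>\<eta> \<ge> 0\<close> by simp
      then show ?thesis
        using cg_phi_bregman[of f x w \<eta> p "z t" gf] convex[rule_format, of p "z t"]
        unfolding \<phi>_def by linarith
    qed
    ultimately show ?thesis unfolding h_def G_def by (simp add: inner_diff_right)
  qed
  moreover have "\<And>t. t \<le> T \<Longrightarrow> h t \<ge> 0"
    using p_min z_in unfolding h_def by auto
  moreover have "\<And>t. t < T \<Longrightarrow> G t > e"
    using cg_partial_gap_gt[OF run] unfolding G_def .
  moreover have "0 \<le> (l + \<eta>) * dd"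
  proof -
    have "(norm (z 0 - z 0))\<^sup>2 \<le> dd" using diam z_in[of 0] by blast
    then show ?thesis using assms(6,7) by simp
  qed
  moreover have "h (Suc t) \<le> h t - 2 / (real t + 2) * G t + (2 / (real t + 2))\<^sup>2 * ((l + \<eta>) * dd) / 2"
    if "t < T" for t
    using cg_partial_descent[OF assms(2) smooth assms(6,7) diam run that]
    unfolding h_def G_def \<phi>_def by simp
  ultimately show ?thesis
    using fw_gap_count[of "(l + \<eta>) * dd" e T h G] \<open>e > 0\<close> by blast
qed

lemma cg_complete_three_point:
  fixes X :: "'v::real_inner set"
  assumes run: "cg_complete X f gf xp w \<eta> e Z S T" and "xs \<in> X"
    and strong: "\<forall>p q. u / 2 * (norm (q - p))\<^sup>2 \<le> f q - f p - inner (gf p) (q - p)"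
  shows "f (Z T) - f xs + inner w (Z T - xs) + \<eta> / 2 * (norm (Z T - xp))\<^sup>2
     + (u + \<eta>) / 2 * (norm (Z T - xs))\<^sup>2 - \<eta> / 2 * (norm (xp - xs))\<^sup>2 \<le> e"
proof -
  define z where "z = Z T"
  define g where "g = cg_grad gf xp w \<eta> z"
  have "inner g (z - S T) \<le> e"
    using run unfolding cg_complete_def g_def z_def by blast
  moreover have "inner g (S T) \<le> inner g xs"
    using run cg_partial_lo[of X f gf xp w \<eta> e Z S T T] \<open>xs \<in> X\<close>
    unfolding cg_complete_def is_lo_def g_def z_def by blast
  ultimately
  have "inner g (z - xs) \<le> e" by (simp add: inner_diff_right)
  then have gap: "inner (gf z) (z - xs) + inner w (z - xs) + \<eta> * inner (z - xp) (z - xs) \<le> e"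
    unfolding g_def cg_grad_def by (simp add: inner_add_left)
  have strong_z: "u / 2 * (norm (z - xs))\<^sup>2 \<le> f xs - f z + inner (gf z) (z - xs)"
    using strong[rule_format, of xs z] by (simp add: norm_minus_commute inner_diff_right)
  have two_inner: "2 * inner (z - xp) (z - xs)
      = (norm (z - xp))\<^sup>2 + (norm (z - xs))\<^sup>2 - (norm (xp - xs))\<^sup>2"
    unfolding power2_norm_eq_inner by (simp add: inner_diff_left inner_diff_right inner_commute)
  have "\<eta> * inner (z - xp) (z - xs) = \<eta> / 2 * (2 * inner (z - xp) (z - xs))" by simp
  also have "\<dots> = \<eta> / 2 * (norm (z - xp))\<^sup>2 + \<eta> / 2 * (norm (z - xs))\<^sup>2 - \<eta> / 2 * (norm (xp - xs))\<^sup>2"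
    unfolding two_inner by (simp only: right_diff_distrib distrib_left)
  finally have "\<eta> * inner (z - xp) (z - xs) = \<eta> / 2 * (norm (z - xp))\<^sup>2
      + \<eta> / 2 * (norm (z - xs))\<^sup>2 - \<eta> / 2 * (norm (xp - xs))\<^sup>2" .
  moreover have "(u + \<eta>) / 2 * (norm (z - xs))\<^sup>2
      = u / 2 * (norm (z - xs))\<^sup>2 + \<eta> / 2 * (norm (z - xs))\<^sup>2"
    by (simp add: add_divide_distrib distrib_right)
  ultimately have "f z - f xs + inner w (z - xs) + \<eta> / 2 * (norm (z - xp))\<^sup>2
     + (u + \<eta>) / 2 * (norm (z - xs))\<^sup>2 - \<eta> / 2 * (norm (xp - xs))\<^sup>2 \<le> e"
    using gap strong_z by linarith
  then show ?thesis unfolding z_def .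
qed

lemma weighted_average_gradient_ineq:
  fixes \<theta> :: "'k \<Rightarrow> real" and z :: "'k \<Rightarrow> 'v::real_inner"
  assumes "finite K" and weights: "\<forall>k\<in>K. \<theta> k \<ge> 0" and "sum \<theta> K > 0"
    and convex: "\<forall>p q. 0 \<le> g q - g p - inner (dg p) (q - p)"
  shows "sum \<theta> K * g ((1 / sum \<theta> K) *\<^sub>R (\<Sum>k\<in>K. \<theta> k *\<^sub>R z k)) \<le> (\<Sum>k\<in>K. \<theta> k * g (z k))"
proof -
  define \<Theta> where "\<Theta> = sum \<theta> K"
  define avg where "avg = (1 / \<Theta>) *\<^sub>R (\<Sum>k\<in>K. \<theta> k *\<^sub>R z k)"
  have "(\<Sum>k\<in>K. \<theta> k *\<^sub>R z k) = \<Theta> *\<^sub>R avg"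
    unfolding avg_def using \<open>sum \<theta> K > 0\<close> by (simp add: \<Theta>_def)
  moreover have "(\<Sum>k\<in>K. \<theta> k * inner (dg avg) (z k - avg))
      = inner (dg avg) ((\<Sum>k\<in>K. \<theta> k *\<^sub>R z k) - \<Theta> *\<^sub>R avg)"
    unfolding \<Theta>_def
    by (simp add: inner_diff_right inner_sum_right right_diff_distrib sum_subtractf sum_distrib_right)
  ultimately have "(\<Sum>k\<in>K. \<theta> k * (g avg + inner (dg avg) (z k - avg))) = \<Theta> * g avg"
    unfolding \<Theta>_def by (simp add: distrib_left sum.distrib sum_distrib_right)
  moreover have "(\<Sum>k\<in>K. \<theta> k * (g avg + inner (dg avg) (z k - avg))) \<le> (\<Sum>k\<in>K. \<theta> k * g (z k))"
  proof (rule sum_mono)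
    fix k assume "k \<in> K"
    have "g avg + inner (dg avg) (z k - avg) \<le> g (z k)"
      using convex[rule_format, of "z k" avg] by simp
    then show "\<theta> k * (g avg + inner (dg avg) (z k - avg)) \<le> \<theta> k * g (z k)"
      using weights \<open>k \<in> K\<close> by (simp add: mult_left_mono)
  qed
  ultimately show ?thesis unfolding avg_def \<Theta>_def by simp
qed

lemma sum_par_theta: "(\<Sum>k\<in>{1..n}. par_theta k) = real n * (real n + 3) / 2"
  unfolding par_theta_def by (induction n) (auto simp: sum.cl_ivl_Suc field_simps)

text \<open>Only feasibility of xs (consensus and xs in X) is needed below, not its optimality.\<close>

locale dcgs_run =
  fixes X :: "'v::euclidean_space set" and E :: "nat \<Rightarrow> nat \<Rightarrow> bool" and m :: nat
    and f :: "nat \<Rightarrow> 'v \<Rightarrow> real" and gf :: "nat \<Rightarrow> 'v \<Rightarrow> 'v" and u :: real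
    and x0 y0 xs :: "nat \<Rightarrow> 'v" and N :: nat and D :: real
    and x y :: "nat \<Rightarrow> nat \<Rightarrow> 'v" and Z S :: "nat \<Rightarrow> nat \<Rightarrow> nat \<Rightarrow> 'v" and T :: "nat \<Rightarrow> nat \<Rightarrow> nat"
  assumes sym: "\<forall>i j. E i j \<longrightarrow> E j i"
    and agents: "m \<ge> 1"
    and u_pos: "u > 0"
    and strongly_convex:
      "\<forall>i\<in>{1..m}. \<forall>p q. u / 2 * (norm (q - p))\<^sup>2 \<le> f i q - f i p - inner (gf i p) (q - p)"
    and xs_in: "\<forall>i\<in>{1..m}. xs i \<in> X"
    and xs_consensus: "consensus E m xs"
    and N_pos: "N \<ge> 1"
    and D_primal: "u * sqdist m x0 xs \<le> D"
    and D_dual: "(lap_norm E m)\<^sup>2 * sqnorm m y0 / u \<le> D"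
    and exec: "dcgs_exec X E m f gf par_alpha (par_tau u (lap_norm E m)) (par_eta u) (par_e D m N)
                 x0 y0 N x y Z S T"
begin

definition "obj_gap k = Fsum m f (x k) - Fsum m f xs"
definition "dist_opt k = sqdist m (x k) xs"
definition "dual_sq k = sqnorm m (y k)"
definition "step_sq k = sqdist m (x k) (x (k - 1))"
definition "dual_step_sq k = sqdist m (y k) (y (k - 1))"
definition "coupling k = stacked_inner m (dcgs_w E m (\<lambda>j. x k j - x (k - 1) j)) (y k)"
definition "cross_coupling k =
  stacked_inner m (dcgs_w E m (\<lambda>j. x (k - 1) j - x (k - 2) j)) (\<lambda>j. y k j - y (k - 1) j)"

definition "dual_weight = 2 * (lap_norm E m)\<^sup>2 / u"
definition "dist_weight n = (real n + 1) * (real n + 2) * u / 4"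
definition "step_weight n = (real n + 1) * real n * u / 4"

definition "potential n = dist_weight n * dist_opt n + dual_weight * dual_sq n
  + (real n + 1) * coupling n + step_weight n * step_sq n"

lemma exec_step:
  assumes "k \<in> {1..N}" "i \<in> {1..m}"
  shows "y k i = dcgs_y E m par_alpha (par_tau u (lap_norm E m)) x y k i"
    and "cg_complete X (f i) (gf i) (x (k - 1) i) (dcgs_w E m (y k) i) (par_eta u k) (par_e D m N k i)
           (Z k i) (S k i) (T k i)"
    and "x k i = Z k i (T k i)"
  using exec assms unfolding dcgs_exec_def by blast+

lemma D_nonneg: "D \<ge> 0"
  using D_primal u_pos sqdist_nonneg[of m x0 xs] by (meson order_trans zero_le_mult_iff less_imp_le)

lemma agent_sum_le:
  assumes k: "k \<in> {1..N}"
  shows "obj_gap k + stacked_inner m (dcgs_w E m (y k)) (\<lambda>i. x k i - xs i)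
    + par_eta u k / 2 * step_sq k + (u + par_eta u k) / 2 * dist_opt k
    - par_eta u k / 2 * dist_opt (k - 1) \<le> D / (real N * real k)"
proof -
  have "(\<Sum>i\<in>{1..m}. f i (x k i) - f i (xs i) + inner (dcgs_w E m (y k) i) (x k i - xs i)
       + par_eta u k / 2 * (norm (x k i - x (k - 1) i))\<^sup>2
       + (u + par_eta u k) / 2 * (norm (x k i - xs i))\<^sup>2
       - par_eta u k / 2 * (norm (x (k - 1) i - xs i))\<^sup>2)
     \<le> (\<Sum>i\<in>{1..m}. par_e D m N k i)"
  proof (rule sum_mono)
    fix i assume i: "i \<in> {1..m}"
    show "f i (x k i) - f i (xs i) + inner (dcgs_w E m (y k) i) (x k i - xs i)
       + par_eta u k / 2 * (norm (x k i - x (k - 1) i))\<^sup>2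
       + (u + par_eta u k) / 2 * (norm (x k i - xs i))\<^sup>2
       - par_eta u k / 2 * (norm (x (k - 1) i - xs i))\<^sup>2 \<le> par_e D m N k i"
      using cg_complete_three_point[OF exec_step(2)[OF k i]] xs_in strongly_convex i
      unfolding exec_step(3)[OF k i, symmetric] by blast
  qed
  also have "(\<Sum>i\<in>{1..m}. par_e D m N k i) = D / (real N * real k)"
    unfolding par_e_def using agents by simp
  finally show ?thesis
    unfolding obj_gap_def Fsum_def stacked_inner_def step_sq_def dist_opt_def sqdist_def
    by (simp add: sum.distrib sum_subtractf sum_distrib_left)
qed

text \<open>If the Laplacian norm is 0, then tau_k = 0 and the update divides by zero (1 / 0 = 0);
  the identity survives because the Laplacian itself vanishes.\<close>

lemma dual_update:
  assumes k: "k \<in> {1..N}" and i: "i \<in> {1..m}"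
  shows "dcgs_w E m (dcgs_xt par_alpha x k) i = par_tau u (lap_norm E m) k *\<^sub>R (y k i - y (k - 1) i)"
proof (cases "lap_norm E m = 0")
  case True
  then show ?thesis using dcgs_w_eq_0_if_lap_norm_eq_0[OF True i] by (simp add: par_tau_def)
next
  case False
  then have "par_tau u (lap_norm E m) k \<noteq> 0" using u_pos by (simp add: par_tau_def)
  then show ?thesis
    using exec_step(1)[OF k i] unfolding dcgs_y_def dcgs_w_def by simp
qed

lemma coupling_decomposition:
  assumes k: "k \<in> {1..N}"
  shows "stacked_inner m (dcgs_w E m (y k)) (\<lambda>i. x k i - xs i)
    = par_tau u (lap_norm E m) k / 2 * (dual_sq k - dual_sq (k - 1) + dual_step_sq k)
      - par_alpha k * (coupling (k - 1) + cross_coupling k) + coupling k"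
proof -
  define \<tau> where "\<tau> = par_tau u (lap_norm E m) k"
  define xt where "xt = dcgs_xt par_alpha x k"
  define D1 where "D1 j = x (k - 1) j - x (k - 2) j" for j
  define D0 where "D0 j = x k j - x (k - 1) j" for j
  have xs_kernel: "dcgs_w E m xs i = 0" if "i \<in> {1..m}" for i
    using xs_consensus that unfolding consensus_def dcgs_w_def by blast
  have "stacked_inner m (dcgs_w E m (y k)) (\<lambda>i. x k i - xs i)
      = stacked_inner m (y k) (dcgs_w E m (\<lambda>i. x k i - xs i))"
    by (rule stacked_inner_dcgs_w_swap[OF sym])
  also have "\<dots> = stacked_inner m (y k) (dcgs_w E m (x k))"
    unfolding stacked_inner_def by (intro sum.cong) (auto simp: dcgs_w_diff xs_kernel)
  also have "\<dots> = stacked_inner m (y k) (dcgs_w E m xt)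
      - par_alpha k * stacked_inner m (y k) (dcgs_w E m D1) + stacked_inner m (y k) (dcgs_w E m D0)"
  proof -
    have "x k = (\<lambda>j. (xt j - par_alpha k *\<^sub>R D1 j) + D0 j)"
      unfolding xt_def D1_def D0_def dcgs_xt_def by (simp add: algebra_simps)
    then show ?thesis
      unfolding stacked_inner_def
      by (simp add: dcgs_w_add dcgs_w_diff dcgs_w_scaleR inner_add_right inner_diff_right
          sum.distrib sum_subtractf sum_distrib_left)
  qed
  also have "stacked_inner m (y k) (dcgs_w E m xt) = \<tau> / 2 * (dual_sq k - dual_sq (k - 1) + dual_step_sq k)"
  proof -
    have polar: "inner (y k i) (y k i - y (k - 1) i)
        = ((norm (y k i))\<^sup>2 - (norm (y (k - 1) i))\<^sup>2 + (norm (y k i - y (k - 1) i))\<^sup>2) / 2" for i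
      unfolding power2_norm_eq_inner
      by (simp add: inner_diff_left inner_diff_right inner_commute field_simps)
    have "stacked_inner m (y k) (dcgs_w E m xt) = \<tau> * (\<Sum>i\<in>{1..m}. inner (y k i) (y k i - y (k - 1) i))"
      unfolding stacked_inner_def xt_def sum_distrib_left
      by (intro sum.cong) (auto simp: dual_update[OF k] \<tau>_def)
    also have "\<dots> = \<tau> / 2 * (dual_sq k - dual_sq (k - 1) + dual_step_sq k)"
      unfolding polar dual_sq_def dual_step_sq_def sqnorm_def sqdist_def sum_divide_distrib[symmetric]
      by (simp add: sum.distrib sum_subtractf)
    finally show ?thesis .
  qed
  also have "stacked_inner m (y k) (dcgs_w E m D1) = coupling (k - 1) + cross_coupling k"
  proof -
    have "k - 1 - 1 = k - 2" by simp
    then show ?thesis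
      unfolding coupling_def cross_coupling_def D1_def stacked_inner_def
      by (simp add: inner_diff_left sum_subtractf inner_commute)
  qed
  also have "stacked_inner m (y k) (dcgs_w E m D0) = coupling k"
    unfolding coupling_def D0_def stacked_inner_def by (simp add: inner_commute)
  finally show ?thesis unfolding \<tau>_def .
qed


lemma dual_weight_nonneg: "dual_weight \<ge> 0"
  unfolding dual_weight_def using u_pos by simp

lemma step_weight_nonneg: "step_weight n \<ge> 0"
  unfolding step_weight_def using u_pos by simp

lemma young_weights:
  assumes "n \<ge> 1"
  shows "(real n + 1)\<^sup>2 * (lap_norm E m)\<^sup>2 \<le> 4 * dual_weight * step_weight n"
proof -
  have "1 \<le> real n" using assms by simp
  then have "1 \<le> real n * real n" using mult_mono[of 1 "real n" 1 "real n"] by simp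
  then have "(real n + 1)\<^sup>2 \<le> 2 * (real n + 1) * real n"
    by (simp add: power2_eq_square algebra_simps)
  then have "(real n + 1)\<^sup>2 * (lap_norm E m)\<^sup>2 \<le> 2 * (real n + 1) * real n * (lap_norm E m)\<^sup>2"
    by (rule mult_right_mono) simp
  also have "\<dots> = 4 * dual_weight * step_weight n"
    unfolding dual_weight_def step_weight_def using u_pos by (simp add: field_simps)
  finally show ?thesis .
qed

lemma cross_coupling_le:
  "(real n + 1) * cross_coupling (Suc n) \<le> dual_weight * dual_step_sq (Suc n) + step_weight n * step_sq n"
proof (cases "n = 0")
  case True
  \<comment> \<open>x (1 - 2) = x 0 by truncated subtraction, matching x^(-1) = x^0\<close>
  then show ?thesis
    unfolding cross_coupling_def stacked_inner_def step_weight_def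
    by (simp add: dcgs_w_zero dual_step_sq_def dual_weight_nonneg sqdist_nonneg)
next
  case False
  have "cross_coupling (Suc n)
      = stacked_inner m (dcgs_w E m (\<lambda>j. x n j - x (n - 1) j)) (\<lambda>j. y (Suc n) j - y n j)"
    unfolding cross_coupling_def by (simp add: numeral_2_eq_2)
  moreover have "n \<ge> 1" using False by simp
  ultimately show ?thesis
    unfolding dual_step_sq_def step_sq_def sqdist_eq_sqnorm_diff
    using young_stacked_inner_dcgs_w[OF dual_weight_nonneg step_weight_nonneg young_weights] by simp
qed

lemma potential_final_nonneg: "potential N \<ge> 0"
proof -
  have "(- (real N + 1))\<^sup>2 * (lap_norm E m)\<^sup>2 \<le> 4 * dual_weight * step_weight N"
    using young_weights[OF N_pos] by (simp only: power2_minus)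
  then have "- (real N + 1) * coupling N \<le> dual_weight * dual_sq N + step_weight N * step_sq N"
    unfolding coupling_def dual_sq_def step_sq_def sqdist_eq_sqnorm_diff
    by (rule young_stacked_inner_dcgs_w[OF dual_weight_nonneg step_weight_nonneg])
  moreover have "dist_weight N * dist_opt N \<ge> 0"
    unfolding dist_weight_def dist_opt_def using u_pos sqdist_nonneg[of m "x N" xs] by simp
  ultimately show ?thesis
    unfolding potential_def using mult_minus_left[of "real N + 1" "coupling N"] by linarith
qed

lemma potential_initial_le: "potential 0 \<le> 5 / 2 * D"
proof -
  have "dist_weight 0 * dist_opt 0 \<le> D / 2"
    unfolding dist_weight_def dist_opt_def using exec D_primal by (simp add: dcgs_exec_def)
  moreover have "dual_weight * dual_sq 0 \<le> 2 * D"
    unfolding dual_weight_def dual_sq_def using exec D_dual u_pos by (simp add: dcgs_exec_def field_simps)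
  ultimately show ?thesis
    unfolding potential_def coupling_def step_weight_def stacked_inner_def by (simp add: dcgs_w_zero)
qed

text \<open>Multiplying the k-th summed agent inequality by theta_k = k + 1, the choices
  alpha_k = k/(k+1), eta_k = ku/2 and tau_k = 4 ||L||^2/((k+1)u) make every coefficient match the
  potential at k - 1 and k; the only leftover, the cross coupling, is absorbed by Young's inequality.\<close>

lemma potential_descent:
  assumes "n < N"
  shows "(real (Suc n) + 1) * obj_gap (Suc n)
    \<le> potential n - potential (Suc n) + (real (Suc n) + 1) * (D / (real N * real (Suc n)))"
proof -
  define k where "k = Suc n"
  have k: "k \<in> {1..N}" and kn: "k - 1 = n" using assms unfolding k_def by auto
  define \<tau> where "\<tau> = par_tau u (lap_norm E m) k"
  define \<alpha> where "\<alpha> = par_alpha k"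
  define \<eta> where "\<eta> = par_eta u k"
  have "obj_gap k + (\<tau> / 2 * (dual_sq k - dual_sq n + dual_step_sq k) - \<alpha> * (coupling n + cross_coupling k)
      + coupling k) + \<eta> / 2 * step_sq k + (u + \<eta>) / 2 * dist_opt k - \<eta> / 2 * dist_opt n
      \<le> D / (real N * real k)"
    using agent_sum_le[OF k] coupling_decomposition[OF k] unfolding kn \<tau>_def \<alpha>_def \<eta>_def by simp
  from mult_left_mono[OF this, of "real k + 1"]
  have "(real k + 1) * obj_gap k + ((real k + 1) * (\<tau> / 2)) * dual_sq k
      - ((real k + 1) * (\<tau> / 2)) * dual_sq n + ((real k + 1) * (\<tau> / 2)) * dual_step_sq k
      - ((real k + 1) * \<alpha>) * coupling n - ((real k + 1) * \<alpha>) * cross_coupling k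
      + (real k + 1) * coupling k + ((real k + 1) * (\<eta> / 2)) * step_sq k
      + ((real k + 1) * ((u + \<eta>) / 2)) * dist_opt k - ((real k + 1) * (\<eta> / 2)) * dist_opt n
      \<le> (real k + 1) * (D / (real N * real k))"
    by (simp add: algebra_simps)
  moreover have "(real k + 1) * (\<tau> / 2) = dual_weight"
  proof -
    have k_nz: "real k + 1 \<noteq> 0" by simp
    have "(real k + 1) * (\<tau> / 2)
        = (real k + 1) * (4 * (lap_norm E m)\<^sup>2) / ((real k + 1) * u) / 2"
      unfolding \<tau>_def par_tau_def by (simp only: times_divide_eq_right)
    then show ?thesis
      unfolding nonzero_mult_divide_mult_cancel_left[OF k_nz] dual_weight_def by simp
  qed
  moreover have "(real k + 1) * \<alpha> = real n + 1"
    unfolding \<alpha>_def par_alpha_def k_def by (simp add: field_simps)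
  moreover have "(real k + 1) * (\<eta> / 2) = dist_weight n"
    unfolding \<eta>_def par_eta_def dist_weight_def k_def by (simp add: field_simps)
  moreover have "(real k + 1) * ((u + \<eta>) / 2) = dist_weight k"
    unfolding \<eta>_def par_eta_def dist_weight_def by (simp add: field_simps)
  ultimately have "(real k + 1) * obj_gap k + dual_weight * dual_sq k - dual_weight * dual_sq n
      + dual_weight * dual_step_sq k - (real n + 1) * coupling n - (real n + 1) * cross_coupling k
      + (real k + 1) * coupling k + dist_weight n * step_sq k + dist_weight k * dist_opt k
      - dist_weight n * dist_opt n \<le> (real k + 1) * (D / (real N * real k))"
    by (simp only:)
  moreover have "step_weight k = dist_weight n"
    unfolding step_weight_def dist_weight_def k_def by (simp add: field_simps)
  ultimately show ?thesis
    using cross_coupling_le[of n] unfolding potential_def k_def[symmetric] kn by simp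
qed

lemma inexactness_sum_le: "(\<Sum>k\<in>{1..N}. (real k + 1) * (D / (real N * real k))) \<le> 2 * D"
proof -
  have "(\<Sum>k\<in>{1..N}. (real k + 1) * (D / (real N * real k))) \<le> (\<Sum>k\<in>{1..N}. 2 * D / real N)"
  proof (rule sum_mono)
    fix k assume "k \<in> {1..N}"
    then have "(real k + 1) / real k \<le> 2" by (simp add: field_simps)
    from mult_right_mono[OF this, of "D / real N"] D_nonneg
    show "(real k + 1) * (D / (real N * real k)) \<le> 2 * D / real N" by (simp add: field_simps)
  qed
  also have "\<dots> = 2 * D" using N_pos by simp
  finally show ?thesis .
qed

lemma weighted_gap_sum_le: "(\<Sum>k\<in>{1..N}. (real k + 1) * obj_gap k) \<le> 9 / 2 * D"
proof -
  have telescope: "n \<le> N \<Longrightarrow> (\<Sum>k\<in>{1..n}. (real k + 1) * obj_gap k)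
      \<le> potential 0 - potential n + (\<Sum>k\<in>{1..n}. (real k + 1) * (D / (real N * real k)))" for n
  proof (induction n)
    case (Suc n)
    then show ?case using potential_descent[of n] by (simp add: sum.cl_ivl_Suc)
  qed simp
  show ?thesis
    using telescope[of N] potential_final_nonneg potential_initial_le inexactness_sum_le by simp
qed


lemma output_gap_le: "Fsum m f (dcgs_out N par_theta x) - Fsum m f xs \<le> 9 * D / (real N)\<^sup>2"
proof -
  define \<Theta> where "\<Theta> = (\<Sum>k\<in>{1..N}. par_theta k)"
  have \<Theta>: "\<Theta> = real N * (real N + 3) / 2" unfolding \<Theta>_def by (rule sum_par_theta)
  have "(real N)\<^sup>2 / 2 \<le> \<Theta>" unfolding \<Theta> by (simp add: power2_eq_square field_simps)
  have "\<Theta> > 0" unfolding \<Theta> using N_pos by simp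
  have convex: "\<forall>p q. 0 \<le> f i q - f i p - inner (gf i p) (q - p)" if "i \<in> {1..m}" for i
    using strongly_convex that u_pos by (meson order_trans zero_le_power2 mult_nonneg_nonneg
        divide_nonneg_pos less_imp_le zero_less_numeral)
  have "\<Theta> * Fsum m f (dcgs_out N par_theta x) = (\<Sum>i\<in>{1..m}. \<Theta> * f i (dcgs_out N par_theta x i))"
    unfolding Fsum_def by (simp add: sum_distrib_left)
  also have "\<dots> \<le> (\<Sum>i\<in>{1..m}. \<Sum>k\<in>{1..N}. par_theta k * f i (x k i))"
    unfolding dcgs_out_def \<Theta>_def using \<open>\<Theta> > 0\<close> convex
    by (intro sum_mono weighted_average_gradient_ineq) (auto simp: \<Theta>_def par_theta_def)
  also have "\<dots> = (\<Sum>k\<in>{1..N}. par_theta k * Fsum m f (x k))"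
    unfolding Fsum_def by (subst sum.swap) (simp add: sum_distrib_left)
  finally have "\<Theta> * (Fsum m f (dcgs_out N par_theta x) - Fsum m f xs)
      \<le> (\<Sum>k\<in>{1..N}. (real k + 1) * obj_gap k)"
    unfolding obj_gap_def \<Theta>_def par_theta_def
    by (simp add: sum_subtractf sum_distrib_right right_diff_distrib)
  also have "\<dots> \<le> 9 / 2 * D" by (rule weighted_gap_sum_le)
  finally have "\<Theta> * (Fsum m f (dcgs_out N par_theta x) - Fsum m f xs) \<le> 9 / 2 * D" .
  moreover have "(real N)\<^sup>2 > 0" using N_pos by simp
  ultimately show ?thesis
  proof (cases "Fsum m f (dcgs_out N par_theta x) - Fsum m f xs \<le> 0")
    case True
    moreover have "0 \<le> 9 * D / (real N)\<^sup>2" using D_nonneg by simp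
    ultimately show ?thesis by linarith
  next
    case False
    then have "(real N)\<^sup>2 / 2 * (Fsum m f (dcgs_out N par_theta x) - Fsum m f xs) \<le> 9 / 2 * D"
      using \<open>(real N)\<^sup>2 / 2 \<le> \<Theta>\<close> \<open>\<Theta> * _ \<le> 9 / 2 * D\<close>
      by (meson mult_right_mono not_le order_trans less_imp_le)
    then show ?thesis using \<open>(real N)\<^sup>2 > 0\<close> by (simp add: field_simps)
  qed
qed

end

lemma strong_convexity_le_smoothness:
  fixes g :: "'v::euclidean_space \<Rightarrow> real"
  assumes "\<forall>p q. u / 2 * (norm (q - p))\<^sup>2 \<le> g q - g p - inner (dg p) (q - p)
                 \<and> g q - g p - inner (dg p) (q - p) \<le> l / 2 * (norm (q - p))\<^sup>2"
  shows "u \<le> l"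
proof -
  obtain v :: 'v where "v \<in> Basis" using nonempty_Basis by blast
  then have "norm (v - 0) = 1" by simp
  moreover have "u / 2 * (norm (v - 0))\<^sup>2 \<le> l / 2 * (norm (v - 0))\<^sup>2"
    using assms by (meson order_trans)
  ultimately show ?thesis by simp
qed

lemma dcgs_cg_calls_le:
  fixes X :: "'v::euclidean_space set"
  assumes "compact X" "convex X"
    and deriv: "\<forall>z. (g has_derivative (\<lambda>h. inner (dg z) h)) (at z)"
    and bounds: "\<forall>p q. u / 2 * (norm (q - p))\<^sup>2 \<le> g q - g p - inner (dg p) (q - p)
                 \<and> g q - g p - inner (dg p) (q - p) \<le> l / 2 * (norm (q - p))\<^sup>2"
    and u: "0 < u" "u \<le> l"
    and diam: "\<forall>a\<in>X. \<forall>b\<in>X. (norm (a - b))\<^sup>2 \<le> dd" and "dd \<ge> 0"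
    and "D > 0" "m \<ge> 1" and k: "1 \<le> k" "k \<le> N"
    and run: "cg_partial X g dg xx w (par_eta u k) (par_e D m N k i) z s t"
  shows "real (t + 1) \<le> 2 + 24 * real N ^ 3 * l * dd * real m / D"
proof -
  have convex: "\<forall>p q. 0 \<le> g q - g p - inner (dg p) (q - p)"
  proof (intro allI)
    fix p q :: 'v
    have "0 \<le> u / 2 * (norm (q - p))\<^sup>2" using u by simp
    then show "0 \<le> g q - g p - inner (dg p) (q - p)" using bounds by (meson order_trans)
  qed
  have "real (t + 1) \<le> 2 + 16 * ((l + par_eta u k) * dd) / par_e D m N k i"
    using bounds u \<open>D > 0\<close> \<open>m \<ge> 1\<close> k
    by (intro cg_partial_calls_le[OF assms(1,2) deriv convex _ _ _ _ diam run])
      (auto simp: par_eta_def par_e_def)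
  also have "16 * ((l + par_eta u k) * dd) / par_e D m N k i
      = 16 * ((l + real k * u / 2) * real k) * (dd * real m * real N / D)"
    unfolding par_eta_def par_e_def using \<open>D > 0\<close> \<open>m \<ge> 1\<close> k by (simp add: field_simps)
  also have "\<dots> \<le> 16 * (3 / 2 * l * (real N)\<^sup>2) * (dd * real m * real N / D)"
  proof -
    have "real k * u \<le> l * real N"
      using k u mult_mono[of "real k" "real N" u l] by (simp add: mult.commute)
    moreover have "l \<le> l * real N"
      using k u by (simp add: mult_le_cancel_left1)
    ultimately have "l + real k * u / 2 \<le> 3 / 2 * l * real N" by linarith
    then have "(l + real k * u / 2) * real k \<le> (3 / 2 * l * real N) * real N"
      using k u by (intro mult_mono) auto
    then have "16 * ((l + real k * u / 2) * real k) \<le> 16 * (3 / 2 * l * (real N)\<^sup>2)"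
      by (intro mult_left_mono) (simp_all add: power2_eq_square mult.assoc)
    then show ?thesis
      using \<open>dd \<ge> 0\<close> \<open>D > 0\<close> by (intro mult_right_mono) auto
  qed
  also have "\<dots> = 24 * real N ^ 3 * l * dd * real m / D"
    by (simp add: power2_eq_square power3_eq_cube field_simps)
  finally show ?thesis by simp
qed

lemma dcgs_lo_calls_le:
  fixes X :: "'v::euclidean_space set"
  assumes "compact X" "convex X"
    and deriv: "\<forall>i\<in>{1..m}. \<forall>z. (f i has_derivative (\<lambda>h. inner (gf i z) h)) (at z)"
    and bounds: "\<forall>i\<in>{1..m}. \<forall>p q. u / 2 * (norm (q - p))\<^sup>2 \<le> f i q - f i p - inner (gf i p) (q - p)
                 \<and> f i q - f i p - inner (gf i p) (q - p) \<le> l / 2 * (norm (q - p))\<^sup>2"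
    and u: "0 < u" "u \<le> l"
    and diam: "\<forall>a\<in>X. \<forall>b\<in>X. (norm (a - b))\<^sup>2 \<le> dd" and "dd \<ge> 0"
    and "D > 0" "m \<ge> 1"
    and budget: "real N * (2 + 24 * real N ^ 3 * l * dd * real m / D) \<le> C"
  shows "\<forall>i\<in>{1..m}. \<forall>k\<in>{1..N}. \<forall>x y Z S T.
    dcgs_exec X E m f gf par_alpha \<tau> (par_eta u) (par_e D m N) x0 y0 (k - 1) x y Z S T
    \<longrightarrow> (\<forall>z s t. cg_partial X (f i) (gf i) (x (k - 1) i)
          (dcgs_w E m (dcgs_y E m par_alpha \<tau> x y k) i) (par_eta u k) (par_e D m N k i) z s t
      \<longrightarrow> (\<Sum>k'\<in>{1..k - 1}. real (T k' i + 1)) + real (t + 1) \<le> C)"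
proof (intro ballI allI impI)
  fix i k x y Z S T z s t
  assume i: "i \<in> {1..m}" and k: "k \<in> {1..N}"
    and exec: "dcgs_exec X E m f gf par_alpha \<tau> (par_eta u) (par_e D m N) x0 y0 (k - 1) x y Z S T"
    and run: "cg_partial X (f i) (gf i) (x (k - 1) i) (dcgs_w E m (dcgs_y E m par_alpha \<tau> x y k) i)
      (par_eta u k) (par_e D m N k i) z s t"
  define B where "B = 2 + 24 * real N ^ 3 * l * dd * real m / D"
  have calls: "real (t' + 1) \<le> B"
    if "k' \<in> {1..N}" "cg_partial X (f i) (gf i) xx' w' (par_eta u k') (par_e D m N k' i) z' s' t'"
    for k' xx' w' z' s' t'
    unfolding B_def using that deriv bounds i
    by (intro dcgs_cg_calls_le[OF assms(1,2) _ _ u diam \<open>dd \<ge> 0\<close> \<open>D > 0\<close> \<open>m \<ge> 1\<close>]) auto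
  have "real (T k' i + 1) \<le> B" if k': "k' \<in> {1..k - 1}" for k'
  proof -
    have "cg_partial X (f i) (gf i) (x (k' - 1) i) (dcgs_w E m (y k') i) (par_eta u k') (par_e D m N k' i)
        (Z k' i) (S k' i) (T k' i)"
      using k' exec i unfolding dcgs_exec_def cg_complete_def by blast
    then show ?thesis using k k' by (intro calls) auto
  qed
  then have "(\<Sum>k'\<in>{1..k - 1}. real (T k' i + 1)) + real (t + 1) \<le> real (k - 1) * B + B"
    using sum_bounded_above[of "{1..k - 1}" "\<lambda>k'. real (T k' i + 1)" B] calls[OF k run] by simp
  also have "\<dots> \<le> real N * B"
    using k calls[OF k run] by (simp add: of_nat_diff algebra_simps mult_right_mono)
  also have "\<dots> \<le> C" using budget unfolding B_def .
  finally show "(\<Sum>k'\<in>{1..k - 1}. real (T k' i + 1)) + real (t + 1) \<le> C" .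
qed

lemma nat_ceiling_bounds:
  fixes s :: real
  assumes "s \<ge> 1"
  shows "1 \<le> nat \<lceil>3 * s\<rceil>" and "3 * s \<le> real (nat \<lceil>3 * s\<rceil>)" and "real (nat \<lceil>3 * s\<rceil>) \<le> 4 * s"
proof -
  have real_N: "real (nat \<lceil>3 * s\<rceil>) = of_int \<lceil>3 * s\<rceil>" using assms by simp
  show "3 * s \<le> real (nat \<lceil>3 * s\<rceil>)" "real (nat \<lceil>3 * s\<rceil>) \<le> 4 * s"
    unfolding real_N using assms by linarith+
  then show "1 \<le> nat \<lceil>3 * s\<rceil>" using assms by linarith
qed

lemma objective_target_le:
  assumes "\<epsilon> > 0" "D \<ge> 0" "3 * sqrt (D / \<epsilon>) \<le> real N" "N \<ge> 1"
  shows "9 * D / (real N)\<^sup>2 \<le> \<epsilon>"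
proof -
  have "(3 * sqrt (D / \<epsilon>))\<^sup>2 \<le> (real N)\<^sup>2" using assms by (intro power_mono) auto
  then have "9 * D \<le> \<epsilon> * (real N)\<^sup>2" using assms by (simp add: power_mult_distrib field_simps)
  then show ?thesis using assms by (simp add: field_simps)
qed

lemma lo_budget_le:
  fixes N :: nat
  assumes "\<epsilon> > 0" "D > 0" "\<epsilon> \<le> real m * l" "dd \<ge> 0" "N \<ge> 1" "real N \<le> 4 * sqrt (D / \<epsilon>)"
  shows "real N * (2 + 24 * real N ^ 3 * l * dd * real m / D) \<le> (32 + 6144 * dd) * (real m * l * D / \<epsilon>\<^sup>2)"
proof -
  define M where "M = real m * l"
  have "M > 0" using assms unfolding M_def by linarith
  have N_sq: "(real N)\<^sup>2 \<le> 16 * (D / \<epsilon>)"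
  proof -
    have "(real N)\<^sup>2 \<le> (4 * sqrt (D / \<epsilon>))\<^sup>2" using assms(6) by (intro power_mono) auto
    also have "\<dots> = 16 * (D / \<epsilon>)" using assms(1,2) by (simp add: power_mult_distrib)
    finally show ?thesis .
  qed
  have "D / \<epsilon> \<le> M * D / \<epsilon>\<^sup>2"
    using assms(1-3) by (simp add: M_def field_simps power2_eq_square mult_right_mono)
  moreover have "real N \<le> (real N)\<^sup>2" using assms(5) by (simp add: power2_eq_square)
  ultimately have "real N * 2 \<le> 32 * (M * D / \<epsilon>\<^sup>2)" using N_sq by linarith
  moreover have "real N * (24 * real N ^ 3 * l * dd * real m / D) \<le> 6144 * dd * (M * D / \<epsilon>\<^sup>2)"
  proof -
    have "real N ^ 4 \<le> (16 * (D / \<epsilon>))\<^sup>2"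
      using N_sq by (metis power_mono of_nat_0_le_iff zero_le_power2 power_mult[of _ 2 2] num_double
          numeral_times_numeral mult_2)
    also have "(16 * (D / \<epsilon>))\<^sup>2 = 256 * (D / \<epsilon>)\<^sup>2" by (simp only: power_mult_distrib) simp
    finally have "real N ^ 4 \<le> 256 * (D / \<epsilon>)\<^sup>2" .
    from mult_right_mono[OF this, of "24 * M * dd / D"]
    have "real N ^ 4 * (24 * M * dd / D) \<le> 256 * (D / \<epsilon>)\<^sup>2 * (24 * M * dd / D)"
      using \<open>M > 0\<close> assms(2,4) by simp
    then show ?thesis
      using assms(1,2) unfolding M_def by (simp add: power2_eq_square power_def field_simps)
  qed
  ultimately show ?thesis
    unfolding M_def
    using distrib_left[of "real N" 2 "24 * real N ^ 3 * l * dd * real m / D"]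
      distrib_right[of 32 "6144 * dd" "real m * l * D / \<epsilon>\<^sup>2"]
    by linarith
qed

lemma dcgs_complexity:
  fixes X :: "'v::euclidean_space set"
  assumes "compact X" "convex X"
    and diam: "\<forall>a\<in>X. \<forall>b\<in>X. (norm (a - b))\<^sup>2 \<le> dd" and "dd \<ge> 0"
    and graph: "graph_ok E m" and "u > 0"
    and deriv: "\<forall>i\<in>{1..m}. \<forall>z. (f i has_derivative (\<lambda>h. inner (gf i z) h)) (at z)"
    and bounds: "\<forall>i\<in>{1..m}. \<forall>p q. u / 2 * (norm (q - p))\<^sup>2 \<le> f i q - f i p - inner (gf i p) (q - p)
                        \<and> f i q - f i p - inner (gf i p) (q - p) \<le> l / 2 * (norm (q - p))\<^sup>2"
    and xs_in: "\<forall>i\<in>{1..m}. xs i \<in> X" and xs_consensus: "consensus E m xs"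
    and D_pos: "Dconst u (lap_norm E m) m x0 xs y0 > 0"
  shows "(let D = Dconst u (lap_norm E m) m x0 xs y0; Lnm = lap_norm E m in
       \<exists>\<epsilon>0>0. \<forall>\<epsilon>. 0 < \<epsilon> \<and> \<epsilon> \<le> \<epsilon>0 \<longrightarrow>
        (\<exists>N::nat. N \<ge> 1
          \<and> real (2 * N) \<le> 8 * sqrt (D / \<epsilon>)
          \<and> (\<forall>i\<in>{1..m}. \<forall>k\<in>{1..N}. \<forall>x y Z S T.
               dcgs_exec X E m f gf par_alpha (par_tau u Lnm) (par_eta u) (par_e D m N)
                 x0 y0 (k - 1) x y Z S T
               \<longrightarrow> (\<forall>z s t. cg_partial X (f i) (gf i) (x (k - 1) i)
                      (dcgs_w E m (dcgs_y E m par_alpha (par_tau u Lnm) x y k) i)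
                      (par_eta u k) (par_e D m N k i) z s t
                    \<longrightarrow> (\<Sum>k'\<in>{1..k - 1}. real (T k' i + 1)) + real (t + 1)
                         \<le> (32 + 6144 * dd) * (real m * l * D / \<epsilon>\<^sup>2)))
          \<and> (\<forall>x y Z S T.
               dcgs_exec X E m f gf par_alpha (par_tau u Lnm) (par_eta u) (par_e D m N)
                 x0 y0 N x y Z S T
               \<longrightarrow> Fsum m f (dcgs_out N par_theta x) - Fsum m f xs \<le> \<epsilon>)))"
    (is "let D = _; Lnm = _ in \<exists>\<epsilon>0>0. \<forall>\<epsilon>. 0 < \<epsilon> \<and> \<epsilon> \<le> \<epsilon>0 \<longrightarrow>
      (\<exists>N. N \<ge> 1 \<and> real (2 * N) \<le> 8 * sqrt (D / \<epsilon>) \<and> ?lo_calls D Lnm \<epsilon> N \<and> ?gap D Lnm \<epsilon> N)")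
proof -
  define D where "D = Dconst u (lap_norm E m) m x0 xs y0"
  have "D > 0" using D_pos unfolding D_def .
  have "m \<ge> 1" and sym: "\<forall>i j. E i j \<longrightarrow> E j i" using graph unfolding graph_ok_def by auto
  have "1 \<in> {1..m}" using \<open>m \<ge> 1\<close> by simp
  from bounds[THEN bspec, OF this] have "u \<le> l" by (rule strong_convexity_le_smoothness)
  have strongly_convex:
    "\<forall>i\<in>{1..m}. \<forall>p q. u / 2 * (norm (q - p))\<^sup>2 \<le> f i q - f i p - inner (gf i p) (q - p)"
    using bounds by blast
  have D_bounds: "u * sqdist m x0 xs \<le> D" "(lap_norm E m)\<^sup>2 * sqnorm m y0 / u \<le> D"
    unfolding D_def Dconst_def by auto
  have gap_le: "Fsum m f (dcgs_out N par_theta x) - Fsum m f xs \<le> 9 * D / (real N)\<^sup>2"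
    if "N \<ge> 1" "dcgs_exec X E m f gf par_alpha (par_tau u (lap_norm E m)) (par_eta u) (par_e D m N)
         x0 y0 N x y Z S T" for N x y Z S T
  proof -
    have "dcgs_run X E m f gf u x0 y0 xs N D x y Z S T"
      using sym \<open>m \<ge> 1\<close> \<open>u > 0\<close> strongly_convex xs_in xs_consensus that(1) D_bounds that(2)
      by (rule dcgs_run.intro)
    then show ?thesis by (rule dcgs_run.output_gap_le)
  qed
  show ?thesis
    unfolding Let_def D_def[symmetric]
  proof (intro exI[of _ "min D (real m * l)"] conjI allI impI)
    show "0 < min D (real m * l)" using \<open>D > 0\<close> \<open>m \<ge> 1\<close> \<open>u > 0\<close> \<open>u \<le> l\<close> by simp
    fix \<epsilon> assume \<epsilon>: "0 < \<epsilon> \<and> \<epsilon> \<le> min D (real m * l)"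
    then have "sqrt (D / \<epsilon>) \<ge> 1" by simp
    define N where "N = nat \<lceil>3 * sqrt (D / \<epsilon>)\<rceil>"
    note N_bounds = nat_ceiling_bounds[OF \<open>sqrt (D / \<epsilon>) \<ge> 1\<close>, folded N_def]
    show "\<exists>N. N \<ge> 1 \<and> real (2 * N) \<le> 8 * sqrt (D / \<epsilon>)
      \<and> ?lo_calls D (lap_norm E m) \<epsilon> N \<and> ?gap D (lap_norm E m) \<epsilon> N"
    proof (intro exI[of _ N] conjI)
      show "1 \<le> N" "real (2 * N) \<le> 8 * sqrt (D / \<epsilon>)" using N_bounds by auto
      have "real N * (2 + 24 * real N ^ 3 * l * dd * real m / D)
          \<le> (32 + 6144 * dd) * (real m * l * D / \<epsilon>\<^sup>2)"
        using \<epsilon> \<open>D > 0\<close> \<open>dd \<ge> 0\<close> N_bounds by (intro lo_budget_le) auto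
      from dcgs_lo_calls_le[OF assms(1,2) deriv bounds \<open>u > 0\<close> \<open>u \<le> l\<close> diam \<open>dd \<ge> 0\<close> \<open>D > 0\<close>
          \<open>m \<ge> 1\<close> this]
      show "?lo_calls D (lap_norm E m) \<epsilon> N" .
      have "9 * D / (real N)\<^sup>2 \<le> \<epsilon>"
        using \<epsilon> \<open>D > 0\<close> N_bounds by (intro objective_target_le) auto
      then show "?gap D (lap_norm E m) \<epsilon> N"
        using gap_le[OF \<open>1 \<le> N\<close>] by (meson order_trans)
    qed
  qed
qed

theorem corollary2:
  fixes X :: "'v::euclidean_space set"
  assumes "compact X" and "convex X" and "X \<noteq> {}"
  shows "\<exists>C1 C2 :: real.
    \<forall>(m::nat) (E::nat \<Rightarrow> nat \<Rightarrow> bool) (f::nat \<Rightarrow> 'v \<Rightarrow> real) (gf::nat \<Rightarrow> 'v \<Rightarrow> 'v)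
      (u::real) (l::real) (x0::nat \<Rightarrow> 'v) (y0::nat \<Rightarrow> 'v) (xs::nat \<Rightarrow> 'v).
      graph_ok E m
      \<and> u > 0
      \<and> (\<forall>i\<in>{1..m}. \<forall>z. (f i has_derivative (\<lambda>h. inner (gf i z) h)) (at z))
      \<and> (\<forall>i\<in>{1..m}. \<forall>p q. u / 2 * (norm (q - p))\<^sup>2 \<le> f i q - f i p - inner (gf i p) (q - p)
                        \<and> f i q - f i p - inner (gf i p) (q - p) \<le> l / 2 * (norm (q - p))\<^sup>2)
      \<and> (\<forall>i\<in>{1..m}. x0 i \<in> X)
      \<and> (\<forall>i\<in>{1..m}. xs i \<in> X) \<and> consensus E m xs
      \<and> (\<forall>z. (\<forall>i\<in>{1..m}. z i \<in> X) \<and> consensus E m z \<longrightarrow> Fsum m f xs \<le> Fsum m f z)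
      \<and> Dconst u (lap_norm E m) m x0 xs y0 > 0
      \<longrightarrow>
      (let D = Dconst u (lap_norm E m) m x0 xs y0; Lnm = lap_norm E m in
       \<exists>\<epsilon>0>0. \<forall>\<epsilon>. 0 < \<epsilon> \<and> \<epsilon> \<le> \<epsilon>0 \<longrightarrow>
        (\<exists>N::nat. N \<ge> 1
          \<and> real (2 * N) \<le> C1 * sqrt (D / \<epsilon>)
          \<and> (\<forall>i\<in>{1..m}. \<forall>k\<in>{1..N}. \<forall>x y Z S T.
               dcgs_exec X E m f gf par_alpha (par_tau u Lnm) (par_eta u) (par_e D m N)
                 x0 y0 (k - 1) x y Z S T
               \<longrightarrow> (\<forall>z s t. cg_partial X (f i) (gf i) (x (k - 1) i)
                      (dcgs_w E m (dcgs_y E m par_alpha (par_tau u Lnm) x y k) i)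
                      (par_eta u k) (par_e D m N k i) z s t
                    \<longrightarrow> (\<Sum>k'\<in>{1..k - 1}. real (T k' i + 1)) + real (t + 1)
                         \<le> C2 * (real m * l * D / \<epsilon>\<^sup>2)))
          \<and> (\<forall>x y Z S T.
               dcgs_exec X E m f gf par_alpha (par_tau u Lnm) (par_eta u) (par_e D m N)
                 x0 y0 N x y Z S T
               \<longrightarrow> Fsum m f (dcgs_out N par_theta x) - Fsum m f xs \<le> \<epsilon>)))"
proof -
  define dd where "dd = (diameter X)\<^sup>2"
  have "dd \<ge> 0" unfolding dd_def by simp
  have diam: "\<forall>a\<in>X. \<forall>b\<in>X. (norm (a - b))\<^sup>2 \<le> dd"
    unfolding dd_def using diameter_bounded_bound[OF compact_imp_bounded[OF assms(1)]]
    by (simp add: dist_norm power_mono)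
  show ?thesis
    by (intro exI[of _ 8] exI[of _ "32 + 6144 * dd"] allI impI, elim conjE)
      (rule dcgs_complexity[OF assms(1,2) diam \<open>dd \<ge> 0\<close>]; assumption)
qed

end
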